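(* Let $\Pi$ be any one of the six sets \[\{[\overline{123}],[\overline{132}]\},\ \{[\overline{123}],[\overline{213}]\},\ \{[\overline{321}],[\overline{231}]\},\ \{[\overline{321}],[\overline{312}]\},\ \{[\overline{132}],[\overline{231}]\},\ \{[\overline{213}],[\overline{312}]\}.\] Then $\left|\mathrm{Av}_n[\Pi]\right|=1$ for $n\le 2$ and $\left|\mathrm{Av}_n[\Pi]\right|=0$ for $n\ge 3$.
   Context: For $\sigma\in S_n$, the cyclic permutation $[\sigma]$ is the set of all rotations of $\sigma$; $[S_n]$ is the set of cyclic permutations of length $n$. A vincular pattern is a permutation $\pi\in S_k$ with some pairs of adjacent positions joined by an overline (vinculum); a linear permutation $\tau$ contains it if $\tau$ has a subsequence order-isomorphic to $\pi$ whose entries corresponding to positions joined by a vinculum are adjacent in $\tau$. A cyclic permutation $[\sigma]$ contains $[\pi]$ if some rotation of $\sigma$ contains $\pi$. A fully overlined pattern such as $[\overline{123}]$ thus requires three cyclically consecutive entries in the given relative order. $\mathrm{Av}_n[\Pi]$ is the set of $[\sigma]\in[S_n]$ avoiding every pattern in $\Pi$. *)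

theory Defs
  imports Main
begin

definition perms :: "nat \<Rightarrow> nat list set" where
  "perms n = {xs. distinct xs \<and> set xs = {1..n}}"

text \<open>The cyclic permutation [sigma]: the set of all rotations of sigma.\<close>
definition cyc :: "nat list \<Rightarrow> nat list set" where
  "cyc \<sigma> = {rotate k \<sigma> | k. k < length \<sigma>} \<union> {\<sigma>}"

definition cyc_perms :: "nat \<Rightarrow> nat list set set" where
  "cyc_perms n = cyc ` perms n"

text \<open>A vincular pattern: a permutation pi (as a list) together with the set V
  of positions i such that positions i and i+1 are joined by a vinculum.\<close>
type_synonym vpat = "nat list \<times> nat set"

definition contains :: "nat list \<Rightarrow> vpat \<Rightarrow> bool" where
  "contains \<tau> p = (let \<pi> = fst p; V = snd p; k = length \<pi> in
     \<exists>f :: nat \<Rightarrow> nat.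
        (\<forall>i<k. f i < length \<tau>) \<and>
        (\<forall>i j. i < j \<and> j < k \<longrightarrow> f i < f j) \<and>
        (\<forall>i<k. \<forall>j<k. (\<tau> ! f i < \<tau> ! f j) = (\<pi> ! i < \<pi> ! j)) \<and>
        (\<forall>i\<in>V. i + 1 < k \<longrightarrow> f (i + 1) = f i + 1))"

definition ovl :: "nat list \<Rightarrow> vpat" where
  "ovl \<pi> = (\<pi>, {i. i + 1 < length \<pi>})"

definition cyc_contains :: "nat list set \<Rightarrow> vpat \<Rightarrow> bool" where
  "cyc_contains C p = (\<exists>\<sigma>\<in>C. contains \<sigma> p)"

definition Av :: "nat \<Rightarrow> vpat set \<Rightarrow> nat list set set" where
  "Av n \<Pi> = {C \<in> cyc_perms n. \<forall>p\<in>\<Pi>. \<not> cyc_contains C p}"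

end

theory Submission
  imports Defs
begin

(* Each of the six sets consists of the two patterns of length 3 whose smallest (or largest)
   entry sits at a fixed position q. For n >= 3, rotate sigma so that 1 (or n) lands at
   position q: the first three entries of the rotation then standardize to one of these two
   patterns, so no cyclic permutation avoids the set. For n <= 2 no pattern of length 3 fits,
   and all permutations of length at most 2 are rotations of one another. *)

lemma perms_length: "\<sigma> \<in> perms n \<Longrightarrow> length \<sigma> = n"
  unfolding perms_def by (metis (mono_tags) card_atLeastAtMost diff_Suc_1 distinct_card mem_Collect_eq)

lemma rotate_in_perms: "\<sigma> \<in> perms n \<Longrightarrow> rotate k \<sigma> \<in> perms n"
  by (simp add: perms_def)

lemma cyc_eq_range_rotate: "cyc \<sigma> = range (\<lambda>k. rotate k \<sigma>)"
proof -
  have "rotate k \<sigma> \<in> cyc \<sigma>" for k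
  proof (cases "\<sigma> = []")
    case False
    then have "rotate k \<sigma> = rotate (k mod length \<sigma>) \<sigma>" "k mod length \<sigma> < length \<sigma>"
      by (simp_all only: rotate_conv_mod[of k \<sigma>]) simp
    then show ?thesis unfolding cyc_def by blast
  qed (simp add: cyc_def)
  then show ?thesis unfolding cyc_def by (auto intro: range_eqI[of _ _ 0])
qed

lemma cyc_rotate: "cyc (rotate k \<sigma>) = cyc \<sigma>"
proof -
  have "rotate j \<sigma> \<in> range (\<lambda>i. rotate (i + k) \<sigma>)" for j
  proof (cases "\<sigma> = []")
    case False
    then have "j + length \<sigma> * k = j + (length \<sigma> - 1) * k + k"
      by (cases "length \<sigma>") auto
    then have "rotate j \<sigma> = rotate (j + (length \<sigma> - 1) * k + k) \<sigma>"
      by (metis mod_mult_self2 rotate_conv_mod)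
    then show ?thesis by blast
  qed simp
  then show ?thesis
    unfolding cyc_eq_range_rotate rotate_rotate by blast
qed

lemma cyc_subset_perms: "\<sigma> \<in> perms n \<Longrightarrow> cyc \<sigma> \<subseteq> perms n"
  unfolding cyc_eq_range_rotate using rotate_in_perms by blast

lemma cyc_rotate_to:
  assumes "q < length \<sigma>" "x \<in> set \<sigma>"
  shows "\<exists>\<tau>\<in>cyc \<sigma>. \<tau> ! q = x"
proof -
  obtain p where p: "p < length \<sigma>" "\<sigma> ! p = x"
    using assms(2) by (auto simp: in_set_conv_nth)
  have "(q + (p + length \<sigma> - q)) mod length \<sigma> = p"
    using assms(1) p(1) by simp
  then have "rotate (p + length \<sigma> - q) \<sigma> ! q = x"
    using assms(1) p(2) by (simp add: nth_rotate)
  then show ?thesis unfolding cyc_eq_range_rotate by blast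
qed

lemma perms_le_2_rotate:
  assumes "n \<le> 2" "\<sigma> \<in> perms n"
  shows "\<exists>k. \<sigma> = rotate k [1..<Suc n]"
proof -
  have len: "length \<sigma> = n" and set: "set \<sigma> = {1..n}"
    using assms(2) perms_length by (auto simp: perms_def)
  have "n = 0 \<or> n = 1 \<or> n = 2" using assms(1) by auto
  then show ?thesis
  proof (elim disjE)
    assume "n = 0"
    then show ?thesis using len by simp
  next
    assume "n = 1"
    then obtain a where "\<sigma> = [a]"
      using len by (auto simp: length_Suc_conv)
    then have "\<sigma> = rotate 0 [1..<Suc n]" using set \<open>n = 1\<close> by simp
    then show ?thesis by blast
  next
    assume "n = 2"
    then obtain a b where ab: "\<sigma> = [a, b]"
      using len by (auto simp: length_Suc_conv numeral_2_eq_2)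
    moreover have "{1..2::nat} = {1, 2}" by auto
    ultimately have "{a, b} = {1, 2}" using set \<open>n = 2\<close> by simp
    then have "\<sigma> = rotate 0 [1, 2] \<or> \<sigma> = rotate 1 [1, 2]"
      using ab by (auto simp: doubleton_eq_iff)
    moreover have "[1..<Suc n] = [1, 2]" using \<open>n = 2\<close> by (simp add: upt_rec)
    ultimately show ?thesis by metis
  qed
qed

lemma card_cyc_perms_le_2: "n \<le> 2 \<Longrightarrow> card (cyc_perms n) = 1"
proof -
  assume "n \<le> 2"
  have "[1..<Suc n] \<in> perms n"
    by (simp add: perms_def atLeastLessThanSuc_atLeastAtMost del: upt_Suc)
  moreover have "cyc \<sigma> = cyc [1..<Suc n]" if "\<sigma> \<in> perms n" for \<sigma>
    using perms_le_2_rotate[OF \<open>n \<le> 2\<close> that] cyc_rotate by blast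
  ultimately have "cyc_perms n = {cyc [1..<Suc n]}"
    unfolding cyc_perms_def by blast
  then show ?thesis by simp
qed

lemma contains_length_le: "contains \<tau> p \<Longrightarrow> length (fst p) \<le> length \<tau>"
proof -
  assume "contains \<tau> p"
  then obtain f where f_bound: "\<forall>i<length (fst p). f i < length \<tau>"
    and f_mono: "\<forall>i j. i < j \<and> j < length (fst p) \<longrightarrow> f i < f j"
    unfolding contains_def Let_def by blast
  have "inj_on f {..<length (fst p)}"
    by (rule inj_onI) (metis f_mono lessThan_iff linorder_neqE_nat less_irrefl)
  moreover have "f ` {..<length (fst p)} \<subseteq> {..<length \<tau>}"
    using f_bound by auto
  ultimately show ?thesis by (metis card_inj_on_le card_lessThan finite_lessThan)
qed

definition standardize :: "nat list \<Rightarrow> nat list" where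
  "standardize xs = map (\<lambda>x. card {y \<in> set xs. y \<le> x}) xs"

lemma card_le_less_card_le_iff:
  assumes "finite A" "x \<in> A" "z \<in> A"
  shows "card {y \<in> A. y \<le> x} < card {y \<in> A. y \<le> z} \<longleftrightarrow> x < (z::'a::linorder)"
proof
  assume "x < z"
  then have "{y \<in> A. y \<le> x} \<subseteq> {y \<in> A. y \<le> z}" "z \<notin> {y \<in> A. y \<le> x}"
    by auto
  then have "{y \<in> A. y \<le> x} \<subset> {y \<in> A. y \<le> z}"
    using assms(3) by blast
  then show "card {y \<in> A. y \<le> x} < card {y \<in> A. y \<le> z}"
    using assms(1) by (simp add: psubset_card_mono)
next
  assume "card {y \<in> A. y \<le> x} < card {y \<in> A. y \<le> z}"
  moreover have "card {y \<in> A. y \<le> z} \<le> card {y \<in> A. y \<le> x}" if "z \<le> x"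
    using assms(1) that by (intro card_mono) auto
  ultimately show "x < z" by fastforce
qed

lemma length_standardize [simp]: "length (standardize xs) = length xs"
  by (simp add: standardize_def)

lemma standardize_nth_less_iff:
  "i < length xs \<Longrightarrow> j < length xs \<Longrightarrow>
    standardize xs ! i < standardize xs ! j \<longleftrightarrow> xs ! i < xs ! j"
  by (simp add: standardize_def card_le_less_card_le_iff)

lemma standardize_in_perms:
  assumes "distinct xs"
  shows "standardize xs \<in> perms (length xs)"
proof -
  let ?s = "standardize xs"
  have "distinct ?s"
  proof (subst distinct_conv_nth, intro allI impI)
    fix i j assume "i < length ?s" "j < length ?s" "i \<noteq> j"
    then have "xs ! i \<noteq> xs ! j" "i < length xs" "j < length xs"
      using assms by (auto simp: standardize_def nth_eq_iff_index_eq)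
    then show "?s ! i \<noteq> ?s ! j"
      by (metis linorder_neqE_nat standardize_nth_less_iff less_irrefl)
  qed
  moreover have "set ?s \<subseteq> {1..length xs}"
  proof
    fix r assume "r \<in> set ?s"
    then obtain x where x: "x \<in> set xs" "r = card {y \<in> set xs. y \<le> x}"
      by (auto simp: standardize_def)
    then have "0 < r" by (auto simp: card_gt_0_iff)
    moreover have "r \<le> card (set xs)"
      unfolding x(2) by (intro card_mono) auto
    ultimately show "r \<in> {1..length xs}"
      using assms by (simp add: distinct_card)
  qed
  moreover have "card (set ?s) = card {1..length xs}"
    using distinct_card[OF \<open>distinct ?s\<close>] by (simp add: standardize_def)
  ultimately have "set ?s = {1..length xs}"
    by (intro card_subset_eq) auto
  with \<open>distinct ?s\<close> show ?thesis
    unfolding perms_def by simp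
qed

lemma standardize_nth_min:
  assumes "q < length xs" "\<forall>y\<in>set xs. xs ! q \<le> y"
  shows "standardize xs ! q = 1"
proof -
  have "{y \<in> set xs. y \<le> xs ! q} = {xs ! q}"
    using assms nth_mem by fastforce
  then show ?thesis using assms(1) by (simp add: standardize_def)
qed

lemma standardize_nth_max:
  assumes "distinct xs" "q < length xs" "\<forall>y\<in>set xs. y \<le> xs ! q"
  shows "standardize xs ! q = length xs"
proof -
  have "{y \<in> set xs. y \<le> xs ! q} = set xs"
    using assms(3) by auto
  then show ?thesis using assms(1,2) by (simp add: standardize_def distinct_card)
qed

lemma contains_standardize_take:
  assumes "k \<le> length \<tau>"
  shows "contains \<tau> (ovl (standardize (take k \<tau>)))"
proof -
  have "standardize (take k \<tau>) ! i < standardize (take k \<tau>) ! j \<longleftrightarrow> \<tau> ! i < \<tau> ! j"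
    if "i < k" "j < k" for i j
    using that assms by (simp add: standardize_nth_less_iff)
  then show ?thesis
    using assms unfolding contains_def ovl_def Let_def by (intro exI[of _ id]) auto
qed

lemma Av_eq_cyc_perms_if_patterns_long:
  assumes "\<forall>p\<in>\<Pi>. n < length (fst p)"
  shows "Av n \<Pi> = cyc_perms n"
proof -
  have "\<not> cyc_contains (cyc \<sigma>) p" if "\<sigma> \<in> perms n" "p \<in> \<Pi>" for \<sigma> p
    using that assms cyc_subset_perms[OF that(1)] perms_length contains_length_le
    unfolding cyc_contains_def by (metis leD subsetD)
  then show ?thesis
    unfolding Av_def cyc_perms_def by blast
qed

definition extremal_patterns :: "nat \<Rightarrow> nat \<Rightarrow> vpat set" where
  "extremal_patterns q e = ovl ` {\<pi> \<in> perms 3. \<pi> ! q = e}"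

lemma length_extremal_patterns: "p \<in> extremal_patterns q e \<Longrightarrow> length (fst p) = 3"
  by (auto simp: extremal_patterns_def ovl_def perms_length)

lemma cyc_contains_extremal_pattern:
  assumes "\<sigma> \<in> perms n" "3 \<le> n" "q < 3" "e \<in> {1, 3}"
  shows "\<exists>p\<in>extremal_patterns q e. cyc_contains (cyc \<sigma>) p"
proof -
  define x where "x = (if e = 1 then 1 else n)"
  have "x \<in> set \<sigma>" "q < length \<sigma>"
    using assms perms_length unfolding perms_def x_def by auto
  then obtain \<tau> where \<tau>: "\<tau> \<in> cyc \<sigma>" "\<tau> ! q = x"
    using cyc_rotate_to by blast
  then have "\<tau> \<in> perms n"
    using cyc_subset_perms[OF assms(1)] by blast
  then have "length \<tau> = n" "distinct \<tau>" "set \<tau> = {1..n}"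
    using perms_length unfolding perms_def by auto
  define w where "w = take 3 \<tau>"
  have w: "distinct w" "length w = 3" "w ! q = x" "set w \<subseteq> {1..n}"
    unfolding w_def using \<open>length \<tau> = n\<close> \<open>distinct \<tau>\<close> \<open>set \<tau> = {1..n}\<close> \<tau>(2) assms(2,3)
    by (auto dest: in_set_takeD)
  have "standardize w ! q = e"
  proof (cases "e = 1")
    case True
    have "\<forall>y\<in>set w. w ! q \<le> y"
      using w True by (auto simp: x_def)
    then show ?thesis
      using standardize_nth_min[of q w] w(2) assms(3) True by simp
  next
    case False
    then have "e = 3" using assms(4) by simp
    have "\<forall>y\<in>set w. y \<le> w ! q"
      using w False by (auto simp: x_def)
    then show ?thesis
      using standardize_nth_max[of w q] w(1,2) assms(3) \<open>e = 3\<close> by simp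
  qed
  moreover have "standardize w \<in> perms 3"
    using standardize_in_perms[OF w(1)] w(2) by simp
  moreover have "cyc_contains (cyc \<sigma>) (ovl (standardize w))"
    using contains_standardize_take[of 3 \<tau>] \<tau>(1) \<open>length \<tau> = n\<close> assms(2)
    unfolding cyc_contains_def w_def by blast
  ultimately show ?thesis
    unfolding extremal_patterns_def by blast
qed

lemma Av_extremal_patterns_empty:
  "3 \<le> n \<Longrightarrow> q < 3 \<Longrightarrow> e \<in> {1, 3} \<Longrightarrow> Av n (extremal_patterns q e) = {}"
  unfolding Av_def cyc_perms_def using cyc_contains_extremal_pattern by blast

lemma perms_3:
  "perms 3 = {[1, 2, 3], [1, 3, 2], [2, 1, 3], [2, 3, 1], [3, 1, 2], [3, 2, 1]}"
proof -
  have interval: "{1..3::nat} = {1, 2, 3}" by auto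
  have "\<pi> \<in> {[1, 2, 3], [1, 3, 2], [2, 1, 3], [2, 3, 1], [3, 1, 2], [3, 2, 1]}"
    if \<pi>: "\<pi> \<in> perms 3" for \<pi>
  proof -
    obtain a b c where abc: "\<pi> = [a, b, c]"
      using perms_length[OF \<pi>] by (auto simp: length_Suc_conv numeral_3_eq_3)
    have "distinct [a, b, c]" "{a, b, c} = {1, 2, 3}"
      using \<pi> interval unfolding abc perms_def by simp_all
    then have "a \<in> {1, 2, 3}" "b \<in> {1, 2, 3}" "c \<in> {1, 2, 3}" "a \<noteq> b" "a \<noteq> c" "b \<noteq> c"
      by auto
    then show ?thesis unfolding abc by auto
  qed
  moreover have "{[1, 2, 3], [1, 3, 2], [2, 1, 3], [2, 3, 1], [3, 1, 2], [3, 2, 1]} \<subseteq> perms 3"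
    by (auto simp: perms_def interval)
  ultimately show ?thesis by blast
qed

lemma extremal_patterns_cases:
  assumes "\<Pi> \<in> {{ovl [1,2,3], ovl [1,3,2]}, {ovl [1,2,3], ovl [2,1,3]},
                 {ovl [3,2,1], ovl [2,3,1]}, {ovl [3,2,1], ovl [3,1,2]},
                 {ovl [1,3,2], ovl [2,3,1]}, {ovl [2,1,3], ovl [3,1,2]}}"
  shows "\<exists>q e. q < 3 \<and> e \<in> {1, 3} \<and> \<Pi> = extremal_patterns q e"
proof -
  have "extremal_patterns 0 1 = {ovl [1,2,3], ovl [1,3,2]}"
    "extremal_patterns 2 3 = {ovl [1,2,3], ovl [2,1,3]}"
    "extremal_patterns 2 1 = {ovl [3,2,1], ovl [2,3,1]}"
    "extremal_patterns 0 3 = {ovl [3,2,1], ovl [3,1,2]}"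
    "extremal_patterns 1 3 = {ovl [1,3,2], ovl [2,3,1]}"
    "extremal_patterns 1 1 = {ovl [2,1,3], ovl [3,1,2]}"
    by (auto simp: extremal_patterns_def perms_3)
  then have "\<Pi> \<in> {extremal_patterns 0 1, extremal_patterns 2 3, extremal_patterns 2 1,
                extremal_patterns 0 3, extremal_patterns 1 3, extremal_patterns 1 1}"
    using assms by simp
  then show ?thesis by force
qed

theorem proposition4p1:
  fixes \<Pi> :: "vpat set" and n :: nat
  assumes "\<Pi> \<in> {{ovl [1,2,3], ovl [1,3,2]}, {ovl [1,2,3], ovl [2,1,3]},
                 {ovl [3,2,1], ovl [2,3,1]}, {ovl [3,2,1], ovl [3,1,2]},
                 {ovl [1,3,2], ovl [2,3,1]}, {ovl [2,1,3], ovl [3,1,2]}}"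
  shows "(n \<le> 2 \<longrightarrow> card (Av n \<Pi>) = 1) \<and> (n \<ge> 3 \<longrightarrow> card (Av n \<Pi>) = 0)"
proof -
  obtain q e where qe: "q < 3" "e \<in> {1, 3}" and \<Pi>: "\<Pi> = extremal_patterns q e"
    using extremal_patterns_cases[OF assms] by blast
  have "card (Av n \<Pi>) = 1" if "n \<le> 2"
  proof -
    have "\<forall>p\<in>\<Pi>. n < length (fst p)"
      using that length_extremal_patterns unfolding \<Pi> by fastforce
    then show ?thesis
      using Av_eq_cyc_perms_if_patterns_long card_cyc_perms_le_2 that by simp
  qed
  moreover have "card (Av n \<Pi>) = 0" if "n \<ge> 3"
    using Av_extremal_patterns_empty[OF that qe] unfolding \<Pi> by simp
  ultimately show ?thesis by blast
qed

end
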